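(* Let $\gamma>0$, $\gamma\neq1$. Then $N^{\rm alg}_{\mathbb{R}}(r)=c_\gamma\,r/\pi+O(1)$ as $r\to\infty$ for a constant $c_\gamma\le 1+\gamma$, and $c_\gamma=1+\gamma$ if and only if $\gamma$ or $1/\gamma$ is an integer.
   Context: Half-line problem: for $\lambda\neq0$, find $(u,v)$ on $[0,1]$ with $-u''-\lambda^2u=0$, $-v''-\lambda^2\gamma^2v=0$, $u(0)=v(0)=0$, $u(1)=v(1)$, $u'(1)=v'(1)$; $\lambda$ is an ITE if a nontrivial pair exists. ITEs are the nonzero zeros of $F(\lambda)=\gamma\sin\lambda\cos(\gamma\lambda)-\sin(\gamma\lambda)\cos\lambda$; the algebraic multiplicity of an ITE is its order as a zero of $F$. $N^{\rm alg}_{\mathbb{R}}(r)$ is the number of real ITEs in $(0,r]$ counted with algebraic multiplicity. *)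

theory Defs
  imports "HOL-Analysis.Analysis" "HOL-Library.Landau_Symbols"
begin

text \<open>The characteristic function whose nonzero zeros are the ITEs.\<close>
definition ite_F :: "real \<Rightarrow> real \<Rightarrow> real" where
  "ite_F \<gamma> l = \<gamma> * sin l * cos (\<gamma> * l) - sin (\<gamma> * l) * cos l"

definition zero_order :: "(real \<Rightarrow> real) \<Rightarrow> real \<Rightarrow> nat" where
  "zero_order f x = (LEAST n. (deriv ^^ n) f x \<noteq> 0)"

definition N_alg_R :: "real \<Rightarrow> real \<Rightarrow> real" where
  "N_alg_R \<gamma> r =
     real (\<Sum>x\<in>{x. 0 < x \<and> x \<le> r \<and> ite_F \<gamma> x = 0}. zero_order (ite_F \<gamma>) x)"

end

theory Submission
  imports Defs
begin

text \<open>
  Since F(\<lambda>) = Im ((cos \<lambda> + i\<gamma> sin \<lambda>) e^(-i\<gamma>\<lambda>)), we have F = \<rho> sin \<theta> with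
  \<rho>^2 = cos^2 \<lambda> + \<gamma>^2 sin^2 \<lambda> > 0 and a phase \<theta>, normalised to be increasing, satisfying
  \<theta>' = |1 - \<gamma>| (1 + \<gamma>) \<gamma> sin^2 \<lambda> / \<rho>^2 and |\<theta>(\<lambda>) - |1 - \<gamma>| \<lambda>| < \<pi>/2. Hence F has exactly
  \<lfloor>\<theta>(r)/\<pi>\<rfloor> distinct zeros in (0, r]. Such a zero is simple unless sin \<lambda> = 0, where it is
  triple; the triple zeros are the k\<pi> with \<gamma>k \<in> \<int>, i.e. the multiples of q\<pi> when \<gamma> = p/q in
  lowest terms, and there are none for irrational \<gamma>. So N(r) = c r/\<pi> + O(1) with
  c = |1 - \<gamma>| + 2/q (resp. c = |1 - \<gamma>|). Finally 1 + \<gamma> = |1 - \<gamma>| + 2 min(1, \<gamma>) and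
  q min(1, \<gamma>) = min(q, p) \<ge> 1, so c \<le> 1 + \<gamma> with equality iff q = 1 or p = 1.
\<close>

section \<open>Multiplicities of the zeros\<close>

lemma zero_order_eqI:
  assumes "(deriv ^^ k) f x \<noteq> 0" and "\<And>j. j < k \<Longrightarrow> (deriv ^^ j) f x = 0"
  shows "zero_order f x = k"
  unfolding zero_order_def
  by (rule Least_equality) (use assms in \<open>force simp: not_le [symmetric]\<close>)+

lemma higher_deriv_ite_F:
  "deriv (ite_F g) = (\<lambda>x. (1 - g\<^sup>2) * sin x * sin (g * x))"
  "(deriv ^^ 2) (ite_F g) = (\<lambda>x. (1 - g\<^sup>2) * (cos x * sin (g * x) + g * sin x * cos (g * x)))"
  "(deriv ^^ 3) (ite_F g) =
     (\<lambda>x. (1 - g\<^sup>2) * (2 * g * cos x * cos (g * x) - (1 + g\<^sup>2) * sin x * sin (g * x)))"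
proof -
  have d1: "deriv (ite_F g) = (\<lambda>x. (1 - g\<^sup>2) * sin x * sin (g * x))"
    unfolding ite_F_def [abs_def]
    by (rule ext, rule DERIV_imp_deriv, (rule derivative_eq_intros refl | simp)+)
      (simp add: power2_eq_square algebra_simps)
  have d2: "deriv (\<lambda>x. (1 - g\<^sup>2) * sin x * sin (g * x))
      = (\<lambda>x. (1 - g\<^sup>2) * (cos x * sin (g * x) + g * sin x * cos (g * x)))"
    by (rule ext, rule DERIV_imp_deriv, (rule derivative_eq_intros refl | simp)+)
      (simp add: algebra_simps)
  have d3: "deriv (\<lambda>x. (1 - g\<^sup>2) * (cos x * sin (g * x) + g * sin x * cos (g * x)))
      = (\<lambda>x. (1 - g\<^sup>2) * (2 * g * cos x * cos (g * x) - (1 + g\<^sup>2) * sin x * sin (g * x)))"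
    by (rule ext, rule DERIV_imp_deriv, (rule derivative_eq_intros refl | simp)+)
      (simp add: power2_eq_square algebra_simps)
  show "deriv (ite_F g) = (\<lambda>x. (1 - g\<^sup>2) * sin x * sin (g * x))"
    by (fact d1)
  show "(deriv ^^ 2) (ite_F g) = (\<lambda>x. (1 - g\<^sup>2) * (cos x * sin (g * x) + g * sin x * cos (g * x)))"
    using d1 d2 by (simp add: numeral_2_eq_2)
  show "(deriv ^^ 3) (ite_F g) =
      (\<lambda>x. (1 - g\<^sup>2) * (2 * g * cos x * cos (g * x) - (1 + g\<^sup>2) * sin x * sin (g * x)))"
    using d1 d2 d3 by (simp add: numeral_3_eq_3)
qed

lemma ite_F_eq_0_iff_at_sin_zero:
  assumes "sin x = 0"
  shows "ite_F g x = 0 \<longleftrightarrow> sin (g * x) = 0"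
proof -
  have "cos x \<noteq> 0" using assms sin_cos_squared_add [of x] by auto
  with assms show ?thesis by (simp add: ite_F_def)
qed

lemma zero_order_ite_F_simple:
  assumes "0 < g" "g \<noteq> 1" "ite_F g x = 0" "sin x \<noteq> 0"
  shows "zero_order (ite_F g) x = 1"
proof (rule zero_order_eqI)
  have "sin (g * x) \<noteq> 0"
  proof
    assume "sin (g * x) = 0"
    then have "cos (g * x) \<noteq> 0" using sin_cos_squared_add [of "g * x"] by auto
    with assms \<open>sin (g * x) = 0\<close> show False by (simp add: ite_F_def)
  qed
  with assms show "(deriv ^^ 1) (ite_F g) x \<noteq> 0"
    by (auto simp: higher_deriv_ite_F power2_eq_1_iff)
qed (use assms in auto)

lemma zero_order_ite_F_triple:
  assumes "0 < g" "g \<noteq> 1" "ite_F g x = 0" "sin x = 0"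
  shows "zero_order (ite_F g) x = 3"
proof (rule zero_order_eqI)
  have "sin (g * x) = 0" using assms ite_F_eq_0_iff_at_sin_zero by blast
  then have "cos (g * x) \<noteq> 0" "cos x \<noteq> 0"
    using sin_cos_squared_add [of "g * x"] sin_cos_squared_add [of x] \<open>sin x = 0\<close> by auto
  with assms \<open>sin (g * x) = 0\<close> show "(deriv ^^ 3) (ite_F g) x \<noteq> 0"
    by (auto simp: higher_deriv_ite_F power2_eq_1_iff)
  show "(deriv ^^ j) (ite_F g) x = 0" if "j < 3" for j
  proof -
    from that have "j = 0 \<or> j = 1 \<or> j = 2" by auto
    with assms \<open>sin (g * x) = 0\<close> show ?thesis by (auto simp: higher_deriv_ite_F)
  qed
qed

section \<open>The phase of the characteristic function\<close>

lemma cos_sq_add_mult_sin_sq_pos: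
  fixes a x :: real
  assumes "0 < a"
  shows "0 < cos x ^ 2 + a * sin x ^ 2"
proof (cases "cos x = 0")
  case True
  then have "sin x ^ 2 = 1" using sin_cos_squared_add [of x] by simp
  with assms True show ?thesis by simp
qed (use assms in \<open>simp add: add_pos_nonneg\<close>)

text \<open>\<open>tan (\<theta> - x)\<close> for \<open>\<theta> = arg (cos x + i g sin x)\<close>, i.e. \<open>tan \<theta> = g tan x\<close>, in a form that
  is defined for all \<open>x\<close>.\<close>
definition ite_tan_shift :: "real \<Rightarrow> real \<Rightarrow> real" where
  "ite_tan_shift g x = (g - 1) * sin x * cos x / (cos x ^ 2 + g * sin x ^ 2)"

text \<open>The factor \<open>sgn (1 - g)\<close> makes the phase increasing on both sides of \<open>g = 1\<close>.\<close>
definition ite_phase :: "real \<Rightarrow> real \<Rightarrow> real" where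
  "ite_phase g x = sgn (1 - g) * ((1 - g) * x + arctan (ite_tan_shift g x))"

lemma one_add_ite_tan_shift_sq:
  assumes "0 < g"
  shows "1 + (ite_tan_shift g x)\<^sup>2
           = (cos x ^ 2 + g\<^sup>2 * sin x ^ 2) / (cos x ^ 2 + g * sin x ^ 2)\<^sup>2"
proof -
  have "cos x ^ 2 + g * sin x ^ 2 > 0" by (rule cos_sq_add_mult_sin_sq_pos) fact
  have "sin x ^ 2 + cos x ^ 2 = 1" by simp
  then have "((g - 1) * sin x * cos x)\<^sup>2 + (cos x ^ 2 + g * sin x ^ 2)\<^sup>2
      = cos x ^ 2 + g\<^sup>2 * sin x ^ 2"
    by algebra
  with \<open>cos x ^ 2 + g * sin x ^ 2 > 0\<close> show ?thesis
    unfolding ite_tan_shift_def by (simp add: field_simps)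
qed

lemma ite_F_eq_amplitude_sin:
  assumes "0 < g"
  shows "ite_F g x = sqrt (cos x ^ 2 + g\<^sup>2 * sin x ^ 2)
                     * sin ((1 - g) * x + arctan (ite_tan_shift g x))"
proof -
  define D where "D = cos x ^ 2 + g * sin x ^ 2"
  define \<rho> where "\<rho> = sqrt (cos x ^ 2 + g\<^sup>2 * sin x ^ 2)"
  define a where "a = arctan (ite_tan_shift g x)"
  have "D > 0" unfolding D_def by (rule cos_sq_add_mult_sin_sq_pos) fact
  have "\<rho> > 0"
    unfolding \<rho>_def using cos_sq_add_mult_sin_sq_pos [of "g\<^sup>2" x] assms by simp
  have sqrt_eq: "sqrt (1 + (ite_tan_shift g x)\<^sup>2) = \<rho> / D"
    using \<open>D > 0\<close> by (simp add: one_add_ite_tan_shift_sq [OF assms] real_sqrt_divide \<rho>_def D_def)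
  have cos_a: "cos a = D / \<rho>"
    using \<open>D > 0\<close> by (simp add: a_def cos_arctan sqrt_eq)
  have sin_a: "sin a = (g - 1) * sin x * cos x / \<rho>"
    unfolding a_def sin_arctan sqrt_eq using \<open>D > 0\<close> by (simp add: ite_tan_shift_def D_def)
  have "(1 - g) * x + a = (x + a) - g * x" by (simp add: algebra_simps)
  then have "\<rho> * sin ((1 - g) * x + a)
      = (sin x * D + cos x * ((g - 1) * sin x * cos x)) * cos (g * x)
        - (cos x * D - sin x * ((g - 1) * sin x * cos x)) * sin (g * x)"
    using \<open>\<rho> > 0\<close> by (simp add: sin_diff sin_add cos_add cos_a sin_a field_simps)
  also have "\<dots> = ite_F g x"
    unfolding ite_F_def D_def using sin_cos_squared_add [of x] by algebra
  finally show ?thesis by (simp add: \<rho>_def a_def)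
qed

lemma sin_ite_phase_eq_0_iff:
  assumes "0 < g" "g \<noteq> 1"
  shows "sin (ite_phase g x) = 0 \<longleftrightarrow> ite_F g x = 0"
proof -
  have "0 < cos x ^ 2 + g\<^sup>2 * sin x ^ 2"
    by (rule cos_sq_add_mult_sin_sq_pos) (use assms in simp)
  moreover have "sin (sgn (1 - g) * y) = sgn (1 - g) * sin y" for y
    by (cases "g < 1") (simp_all add: sgn_if)
  ultimately show ?thesis
    using assms by (simp add: ite_phase_def ite_F_eq_amplitude_sin sgn_eq_0_iff)
qed

lemma ite_phase_0 [simp]: "ite_phase g 0 = 0"
  by (simp add: ite_phase_def ite_tan_shift_def)

lemma ite_phase_approx: "\<bar>ite_phase g x - \<bar>1 - g\<bar> * x\<bar> < pi / 2"
proof -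
  have "ite_phase g x - \<bar>1 - g\<bar> * x = sgn (1 - g) * arctan (ite_tan_shift g x)"
    by (simp add: ite_phase_def abs_sgn algebra_simps)
  moreover have "\<bar>arctan (ite_tan_shift g x)\<bar> < pi / 2"
    using arctan_bounded [of "ite_tan_shift g x"] by linarith
  ultimately show ?thesis by (simp add: abs_mult abs_sgn_eq)
qed

lemma ite_tan_shift_has_derivative:
  assumes "0 < g"
  shows "(ite_tan_shift g has_real_derivative
           (g - 1) * (cos x ^ 2 - g * sin x ^ 2) / (cos x ^ 2 + g * sin x ^ 2)\<^sup>2) (at x)"
proof -
  have D: "cos x ^ 2 + g * sin x ^ 2 \<noteq> 0"
    using cos_sq_add_mult_sin_sq_pos [OF assms, of x] by simp
  have sc: "sin x ^ 2 + cos x ^ 2 = 1" by simp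
  show ?thesis
    unfolding ite_tan_shift_def [abs_def]
    apply (rule derivative_eq_intros refl D)+
    using D apply (simp add: field_simps power2_eq_square)
    using sc apply algebra
    done
qed

lemma ite_phase_has_derivative:
  assumes "0 < g"
  shows "(ite_phase g has_real_derivative
           \<bar>1 - g\<bar> * (1 + g) * g * sin x ^ 2 / (cos x ^ 2 + g\<^sup>2 * sin x ^ 2)) (at x)"
proof -
  define D where "D = cos x ^ 2 + g * sin x ^ 2"
  define R where "R = cos x ^ 2 + g\<^sup>2 * sin x ^ 2"
  have "D > 0" unfolding D_def by (rule cos_sq_add_mult_sin_sq_pos) fact
  have "R > 0" unfolding R_def by (rule cos_sq_add_mult_sin_sq_pos) (use assms in simp)
  have "((\<lambda>x. arctan (ite_tan_shift g x)) has_real_derivative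
         inverse (1 + (ite_tan_shift g x)\<^sup>2) * ((g - 1) * (cos x ^ 2 - g * sin x ^ 2) / D\<^sup>2)) (at x)"
    unfolding D_def by (rule DERIV_chain2 [OF DERIV_arctan ite_tan_shift_has_derivative [OF assms]])
  also have "inverse (1 + (ite_tan_shift g x)\<^sup>2) * ((g - 1) * (cos x ^ 2 - g * sin x ^ 2) / D\<^sup>2)
      = (g - 1) * (cos x ^ 2 - g * sin x ^ 2) / R"
    using \<open>D > 0\<close> \<open>R > 0\<close>
    by (simp add: one_add_ite_tan_shift_sq [OF assms] D_def [symmetric] R_def [symmetric] field_simps)
  finally have arctan_deriv: "((\<lambda>x. arctan (ite_tan_shift g x)) has_real_derivative
      (g - 1) * (cos x ^ 2 - g * sin x ^ 2) / R) (at x)" .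
  have "(ite_phase g has_real_derivative
          sgn (1 - g) * ((1 - g) + (g - 1) * (cos x ^ 2 - g * sin x ^ 2) / R)) (at x)"
    unfolding ite_phase_def [abs_def]
    by (intro DERIV_cmult DERIV_add arctan_deriv) (auto intro!: derivative_eq_intros)
  also have "sgn (1 - g) * ((1 - g) + (g - 1) * (cos x ^ 2 - g * sin x ^ 2) / R)
      = \<bar>1 - g\<bar> * (1 + g) * g * sin x ^ 2 / R"
    using \<open>R > 0\<close>
    by (simp add: R_def abs_sgn field_simps) (simp add: power2_eq_square algebra_simps)
  finally show ?thesis unfolding R_def .
qed

lemma sin_nonzero_between:
  fixes a b :: real
  assumes "a < b"
  shows "\<exists>x. a < x \<and> x < b \<and> sin x \<noteq> 0"
proof (rule ccontr)
  assume "\<not> ?thesis"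
  then have zero: "sin y = 0" if "a < y" "y < b" for y
    using that by blast
  define m where "m = (a + b) / 2"
  have local_const: "\<forall>y. \<bar>m - y\<bar> < (b - a) / 2 \<longrightarrow> sin m = sin y"
  proof (intro allI impI)
    fix y assume "\<bar>m - y\<bar> < (b - a) / 2"
    then have "a < y" "y < b" unfolding m_def abs_less_iff by (auto simp: field_simps)
    with zero assms show "sin m = sin y" by (simp add: m_def)
  qed
  have "cos m = 0"
    by (rule DERIV_local_const [OF DERIV_sin _ local_const]) (use assms in simp)
  moreover have "sin m = 0" using zero assms by (simp add: m_def)
  ultimately show False using sin_cos_squared_add [of m] by simp
qed

text \<open>A nondecreasing function is locally constant wherever it is not strictly increasing, so
  there its derivative vanishes.\<close>
lemma strict_mono_if_deriv_nonneg:
  fixes f :: "real \<Rightarrow> real"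
  assumes deriv: "\<And>x. (f has_real_derivative f' x) (at x)"
    and nonneg: "\<And>x. 0 \<le> f' x"
    and nonzero: "\<And>a b. a < b \<Longrightarrow> \<exists>x. a < x \<and> x < b \<and> f' x \<noteq> 0"
  shows "strict_mono f"
proof (rule strict_monoI)
  fix a b :: real
  assume "a < b"
  have incr: "f u \<le> f v" if "u \<le> v" for u v
    by (rule DERIV_nonneg_imp_nondecreasing [OF that]) (use deriv nonneg in blast)
  obtain x where x: "a < x" "x < b" "f' x \<noteq> 0" using nonzero [OF \<open>a < b\<close>] by blast
  show "f a < f b"
  proof (rule ccontr)
    assume "\<not> f a < f b"
    with incr [of a b] \<open>a < b\<close> have "f a = f b" by simp
    have "f x = f y" if "\<bar>x - y\<bar> < min (x - a) (b - x)" for y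
    proof -
      from that have "a \<le> y" "y \<le> b" unfolding min_less_iff_conj abs_less_iff by linarith+
      with incr [of a y] incr [of y b] incr [of a x] incr [of x b] x \<open>f a = f b\<close>
      show "f x = f y" by linarith
    qed
    then have "f' x = 0"
      using x by (intro DERIV_local_const [OF deriv [of x], of "min (x - a) (b - x)"]) auto
    with x show False by simp
  qed
qed

lemma strict_mono_ite_phase:
  assumes "0 < g" "g \<noteq> 1"
  shows "strict_mono (ite_phase g)"
proof (rule strict_mono_if_deriv_nonneg [OF ite_phase_has_derivative [OF assms(1)]])
  have R: "0 < cos x ^ 2 + g\<^sup>2 * sin x ^ 2" for x
    by (rule cos_sq_add_mult_sin_sq_pos) (use assms in simp)
  show "0 \<le> \<bar>1 - g\<bar> * (1 + g) * g * sin x ^ 2 / (cos x ^ 2 + g\<^sup>2 * sin x ^ 2)" for x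
    using assms R [of x] by simp
  show "\<exists>x. a < x \<and> x < b \<and> \<bar>1 - g\<bar> * (1 + g) * g * sin x ^ 2 / (cos x ^ 2 + g\<^sup>2 * sin x ^ 2) \<noteq> 0"
    if ab: "a < b" for a b
  proof -
    obtain x where "a < x" "x < b" "sin x \<noteq> 0" using sin_nonzero_between [OF ab] by blast
    with assms R [of x] show ?thesis by (intro exI [of _ x]) auto
  qed
qed

section \<open>Counting the distinct zeros\<close>

lemma card_zeros_sin_comp:
  fixes h :: "real \<Rightarrow> real"
  assumes mono: "strict_mono_on {0..r} h" and cont: "continuous_on {0..r} h"
    and "h 0 = 0" and "0 \<le> r"
  shows "finite {x. 0 < x \<and> x \<le> r \<and> sin (h x) = 0}"
    and "card {x. 0 < x \<and> x \<le> r \<and> sin (h x) = 0} = nat \<lfloor>h r / pi\<rfloor>"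
proof -
  let ?Z = "{x. 0 < x \<and> x \<le> r \<and> sin (h x) = 0}"
  define k where "k x = \<lfloor>h x / pi\<rfloor>" for x
  have h_eq: "h x = of_int (k x) * pi" if "sin (h x) = 0" for x
    using that by (auto simp: sin_zero_iff_int2 k_def)
  have "bij_betw k ?Z {1..\<lfloor>h r / pi\<rfloor>}"
  proof (rule bij_betwI')
    fix x y assume "x \<in> ?Z" "y \<in> ?Z"
    then show "k x = k y \<longleftrightarrow> x = y"
      using h_eq [of x] h_eq [of y] strict_mono_on_eqD [OF mono, of y x] by auto
  next
    fix x assume x: "x \<in> ?Z"
    then have "0 < h x" using strict_mono_onD [OF mono, of 0 x] \<open>h 0 = 0\<close> by auto
    then have "1 \<le> k x" using h_eq [of x] x by (simp add: zero_less_mult_iff)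
    moreover have "h x \<le> h r" using x strict_mono_on_leD [OF mono, of x r] by auto
    then have "k x \<le> \<lfloor>h r / pi\<rfloor>" unfolding k_def by (intro floor_mono divide_right_mono) auto
    ultimately show "k x \<in> {1..\<lfloor>h r / pi\<rfloor>}" by simp
  next
    fix m assume "m \<in> {1..\<lfloor>h r / pi\<rfloor>}"
    then have "1 \<le> m" "of_int m * pi \<le> h r" by (auto simp: le_floor_iff field_simps)
    moreover from \<open>1 \<le> m\<close> have "h 0 \<le> of_int m * pi" using \<open>h 0 = 0\<close> by simp
    ultimately obtain x where x: "0 \<le> x" "x \<le> r" "h x = of_int m * pi"
      using IVT' [of h 0 _ r] cont \<open>0 \<le> r\<close> by blast
    have "x \<noteq> 0"
    proof
      assume "x = 0"
      with x \<open>h 0 = 0\<close> have "of_int m * pi = 0" by simp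
      with \<open>1 \<le> m\<close> show False by simp
    qed
    with x have "x \<in> ?Z" by (auto simp: sin_zero_iff_int2)
    moreover have "m = k x" using x by (simp add: k_def)
    ultimately show "\<exists>x\<in>?Z. m = k x" by blast
  qed
  then show "finite ?Z" and "card ?Z = nat \<lfloor>h r / pi\<rfloor>"
    using bij_betw_finite bij_betw_same_card by fastforce+
qed

lemma card_ite_F_zeros:
  assumes "0 < g" "g \<noteq> 1" "0 \<le> r"
  shows "finite {x. 0 < x \<and> x \<le> r \<and> ite_F g x = 0}"
    and "card {x. 0 < x \<and> x \<le> r \<and> ite_F g x = 0} = nat \<lfloor>ite_phase g r / pi\<rfloor>"
proof -
  have "strict_mono_on {0..r} (ite_phase g)"
    using strict_mono_ite_phase [OF assms(1,2)] by (simp add: strict_mono_def strict_mono_on_def)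
  moreover have "continuous_on {0..r} (ite_phase g)"
    using ite_phase_has_derivative [OF assms(1)]
    by (intro DERIV_continuous_on) (rule has_field_derivative_at_within)
  ultimately show "finite {x. 0 < x \<and> x \<le> r \<and> ite_F g x = 0}"
    and "card {x. 0 < x \<and> x \<le> r \<and> ite_F g x = 0} = nat \<lfloor>ite_phase g r / pi\<rfloor>"
    using card_zeros_sin_comp [of r "ite_phase g"] assms sin_ite_phase_eq_0_iff [OF assms(1,2)]
    by simp_all
qed

lemma N_alg_R_eq_card_add_triple:
  assumes "0 < g" "g \<noteq> 1" and fin: "finite {x. 0 < x \<and> x \<le> r \<and> ite_F g x = 0}"
  shows "N_alg_R g r = card {x. 0 < x \<and> x \<le> r \<and> ite_F g x = 0}
                       + 2 * card {x. 0 < x \<and> x \<le> r \<and> sin x = 0 \<and> sin (g * x) = 0}"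
proof -
  let ?Z = "{x. 0 < x \<and> x \<le> r \<and> ite_F g x = 0}"
  have "(\<Sum>x\<in>?Z. zero_order (ite_F g) x) = (\<Sum>x\<in>?Z. 1 + (if sin x = 0 then 2 else 0))"
    using zero_order_ite_F_simple [OF assms(1,2)] zero_order_ite_F_triple [OF assms(1,2)]
    by (intro sum.cong) auto
  also have "\<dots> = card ?Z + (\<Sum>x\<in>?Z. if sin x = 0 then 2 else 0)"
    unfolding sum.distrib by simp
  also have "(\<Sum>x\<in>?Z. if sin x = 0 then 2 else 0) = 2 * card {x \<in> ?Z. sin x = 0}"
    by (simp add: sum.inter_filter [OF fin, symmetric])
  also have "{x \<in> ?Z. sin x = 0} = {x. 0 < x \<and> x \<le> r \<and> sin x = 0 \<and> sin (g * x) = 0}"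
    using ite_F_eq_0_iff_at_sin_zero by blast
  finally show ?thesis by (simp add: N_alg_R_def)
qed

section \<open>The triple zeros\<close>

text \<open>The denominators of all fraction representations of \<open>g\<close>; empty iff \<open>g\<close> is irrational.\<close>
definition denominators :: "real \<Rightarrow> nat set" where
  "denominators g = {k. 0 < k \<and> g * real k \<in> \<int>}"

definition min_denominator :: "real \<Rightarrow> nat" where
  "min_denominator g = (LEAST k. k \<in> denominators g)"

lemma min_denominator_mem:
  "denominators g \<noteq> {} \<Longrightarrow> min_denominator g \<in> denominators g"
  unfolding min_denominator_def by (metis LeastI ex_in_conv)

lemma min_denominator_dvd:
  assumes k: "k \<in> denominators g"
  shows "min_denominator g dvd k"
proof -
  let ?q = "min_denominator g"
  have "?q \<in> denominators g" using k min_denominator_mem by blast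
  then obtain a where a: "g * real ?q = of_int a" "0 < ?q"
    by (auto simp: denominators_def elim!: Ints_cases)
  obtain b where b: "g * real k = of_int b" using k by (auto simp: denominators_def elim!: Ints_cases)
  have "real k = real (k mod ?q) + real ?q * real (k div ?q)"
    by (metis mod_mult_div_eq of_nat_add of_nat_mult)
  then have "g * real (k mod ?q) = g * real k - g * real ?q * real (k div ?q)"
    by (simp add: algebra_simps)
  also have "\<dots> = of_int (b - int (k div ?q) * a)"
    using a b by simp
  finally have "g * real (k mod ?q) \<in> \<int>" by simp
  then have "\<not> 0 < k mod ?q"
    using not_less_Least [of "k mod ?q" "\<lambda>k. k \<in> denominators g"] \<open>0 < ?q\<close>
    by (auto simp: denominators_def min_denominator_def)
  then show ?thesis by (simp add: mod_eq_0_iff_dvd)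
qed

lemma common_zero_sin_sin_mult_iff:
  assumes "0 < x"
  shows "sin x = 0 \<and> sin (g * x) = 0 \<longleftrightarrow> (\<exists>k\<in>denominators g. x = real k * pi)"
proof
  assume "sin x = 0 \<and> sin (g * x) = 0"
  then obtain i j :: int where i: "x = of_int i * pi" and j: "g * x = of_int j * pi"
    by (auto simp: sin_zero_iff_int2)
  with assms have "0 < i" by (simp add: zero_less_mult_iff)
  with i j have "nat i \<in> denominators g" "x = real (nat i) * pi"
    by (auto simp: denominators_def)
  then show "\<exists>k\<in>denominators g. x = real k * pi" by blast
next
  assume "\<exists>k\<in>denominators g. x = real k * pi"
  then obtain k j where "x = real k * pi" "g * real k = of_int j"
    by (auto simp: denominators_def elim!: Ints_cases)
  then show "sin x = 0 \<and> sin (g * x) = 0"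
    by (simp add: sin_zero_iff_int2)
qed

lemma common_zeros_sin_sin_mult_eq:
  assumes "denominators g \<noteq> {}" "0 \<le> r"
  shows "{x. 0 < x \<and> x \<le> r \<and> sin x = 0 \<and> sin (g * x) = 0}
           = (\<lambda>j. real j * real (min_denominator g) * pi) `
               {1..nat \<lfloor>r / (real (min_denominator g) * pi)\<rfloor>}"
proof -
  let ?q = "min_denominator g"
  let ?m = "nat \<lfloor>r / (real ?q * pi)\<rfloor>"
  have "?q \<in> denominators g" using min_denominator_mem [OF assms(1)] .
  then have "0 < ?q" by (simp add: denominators_def)
  then have "0 < real ?q * pi" by simp
  have index_le: "j \<le> ?m \<longleftrightarrow> real j * real ?q * pi \<le> r" if "1 \<le> j" for j
  proof
    assume "j \<le> ?m"
    then have "real j \<le> r / (real ?q * pi)" using assms(2) \<open>0 < real ?q * pi\<close>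
      by (meson of_nat_floor of_nat_le_iff order_trans zero_le_divide_iff less_imp_le)
    with \<open>0 < real ?q * pi\<close> show "real j * real ?q * pi \<le> r" by (simp add: field_simps)
  next
    assume "real j * real ?q * pi \<le> r"
    with \<open>0 < real ?q * pi\<close> show "j \<le> ?m" by (intro le_nat_floor) (simp add: field_simps)
  qed
  show ?thesis
  proof (intro set_eqI iffI)
    fix x assume "x \<in> {x. 0 < x \<and> x \<le> r \<and> sin x = 0 \<and> sin (g * x) = 0}"
    then obtain k where x: "0 < x" "x \<le> r" "k \<in> denominators g" "x = real k * pi"
      using common_zero_sin_sin_mult_iff by blast
    then obtain j where "k = ?q * j" using min_denominator_dvd by blast
    with x index_le [of j] show "x \<in> (\<lambda>j. real j * real ?q * pi) ` {1..?m}"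
      by (auto simp: denominators_def mult.commute intro!: image_eqI [of _ _ j])
  next
    fix x assume "x \<in> (\<lambda>j. real j * real ?q * pi) ` {1..?m}"
    then obtain j where j: "1 \<le> j" "j \<le> ?m" "x = real j * real ?q * pi" by auto
    have "g * real ?q \<in> \<int>" using \<open>?q \<in> denominators g\<close> by (simp add: denominators_def)
    with Ints_of_nat have "real j * (g * real ?q) \<in> \<int>" by (rule Ints_mult)
    with j \<open>0 < ?q\<close> have "j * ?q \<in> denominators g"
      by (simp add: denominators_def ac_simps)
    moreover have "0 < x" using j \<open>0 < ?q\<close> by simp
    moreover from this have "sin x = 0 \<and> sin (g * x) = 0"
      unfolding common_zero_sin_sin_mult_iff [OF \<open>0 < x\<close>] using \<open>j * ?q \<in> denominators g\<close> j(3)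
      by (intro bexI [of _ "j * ?q"]) simp_all
    ultimately show "x \<in> {x. 0 < x \<and> x \<le> r \<and> sin x = 0 \<and> sin (g * x) = 0}"
      using j index_le [of j] by simp
  qed
qed

lemma card_common_zeros_sin_sin_mult:
  assumes "denominators g \<noteq> {}" "0 \<le> r"
  shows "card {x. 0 < x \<and> x \<le> r \<and> sin x = 0 \<and> sin (g * x) = 0}
           = nat \<lfloor>r / (real (min_denominator g) * pi)\<rfloor>"
proof -
  have "0 < real (min_denominator g) * pi"
    using min_denominator_mem [OF assms(1)] by (simp add: denominators_def)
  then have "inj_on (\<lambda>j. real j * real (min_denominator g) * pi) A" for A
    by (auto simp: inj_on_def)
  then show ?thesis by (simp add: common_zeros_sin_sin_mult_eq [OF assms] card_image)
qed

section \<open>The density constant\<close>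

definition ite_density :: "real \<Rightarrow> real" where
  "ite_density g = \<bar>1 - g\<bar> + (if denominators g = {} then 0 else 2 / real (min_denominator g))"

lemma inverse_Ints_denominator:
  assumes "0 < g" "1 / g \<in> \<int>"
  obtains n where "n \<in> denominators g" "g * real n = 1"
proof -
  obtain i :: int where i: "1 / g = of_int i" using assms(2) by (elim Ints_cases)
  with assms(1) have "0 < i" by (metis of_int_0_less_iff zero_less_divide_1_iff)
  with i assms(1) have "nat i \<in> denominators g" "g * real (nat i) = 1"
    by (auto simp: denominators_def field_simps)
  then show ?thesis by (rule that)
qed

lemma min_denominator_bounds:
  assumes "0 < g" "denominators g \<noteq> {}"
  shows "1 \<le> min 1 g * real (min_denominator g)"
    and "min 1 g * real (min_denominator g) = 1 \<longleftrightarrow> g \<in> \<int> \<or> 1 / g \<in> \<int>"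
proof -
  let ?q = "min_denominator g"
  have "?q \<in> denominators g" using min_denominator_mem [OF assms(2)] .
  then obtain p :: int where p: "g * real ?q = of_int p" and "0 < ?q"
    by (auto simp: denominators_def elim!: Ints_cases)
  with assms(1) have "1 \<le> p" by (metis mult_pos_pos of_int_0_less_iff of_nat_0_less_iff zero_less_imp_eq_int
      int_one_le_iff_zero_less of_int_of_nat_eq)
  have min_eq: "min 1 g * real ?q = min (real ?q) (of_int p)"
    using p by (simp add: min_mult_distrib_right)
  show "1 \<le> min 1 g * real ?q" using min_eq \<open>0 < ?q\<close> \<open>1 \<le> p\<close> by simp
  have "?q = 1 \<longleftrightarrow> g \<in> \<int>"
  proof
    assume "g \<in> \<int>"
    then have "1 \<in> denominators g" by (simp add: denominators_def)
    then have "?q \<le> 1" unfolding min_denominator_def by (rule Least_le)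
    with \<open>0 < ?q\<close> show "?q = 1" by simp
  next
    assume "?q = 1"
    with p show "g \<in> \<int>" by (metis Ints_of_int mult.right_neutral of_nat_1)
  qed
  moreover have "p = 1 \<longleftrightarrow> 1 / g \<in> \<int>"
  proof
    assume "1 / g \<in> \<int>"
    then obtain n where n: "n \<in> denominators g" "g * real n = 1"
      using inverse_Ints_denominator assms(1) by blast
    from n(1) have "?q \<le> n" unfolding min_denominator_def by (rule Least_le)
    with n assms(1) p have "of_int p \<le> (1::real)" by (metis mult_left_mono of_nat_le_iff less_imp_le)
    with \<open>1 \<le> p\<close> show "p = 1" by simp
  next
    assume "p = 1"
    with p assms(1) have "1 / g = real ?q" by (simp add: field_simps)
    then show "1 / g \<in> \<int>" by simp
  qed
  ultimately show "min 1 g * real ?q = 1 \<longleftrightarrow> g \<in> \<int> \<or> 1 / g \<in> \<int>"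
    using min_eq \<open>0 < ?q\<close> \<open>1 \<le> p\<close> by (auto simp: min_def)
qed

lemma ite_density_le_one_add:
  assumes "0 < g"
  shows "ite_density g \<le> 1 + g"
    and "ite_density g = 1 + g \<longleftrightarrow> g \<in> \<int> \<or> 1 / g \<in> \<int>"
proof -
  have abs_eq: "\<bar>1 - g\<bar> = 1 + g - 2 * min 1 g" by (simp add: min_def)
  have "ite_density g \<le> 1 + g \<and> (ite_density g = 1 + g \<longleftrightarrow> g \<in> \<int> \<or> 1 / g \<in> \<int>)"
  proof (cases "denominators g = {}")
    case True
    then have "g \<notin> \<int>" by (auto simp: denominators_def)
    moreover have "1 / g \<notin> \<int>" using True inverse_Ints_denominator [OF assms] by blast
    ultimately show ?thesis
      using True assms by (auto simp: ite_density_def abs_eq)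
  next
    case False
    let ?q = "real (min_denominator g)"
    have "0 < ?q" using min_denominator_mem [OF False] by (simp add: denominators_def)
    then have "ite_density g = 1 + g - 2 * (min 1 g * ?q - 1) / ?q"
      using False by (simp add: ite_density_def abs_eq field_simps)
    then show ?thesis
      using min_denominator_bounds [OF assms False] \<open>0 < ?q\<close> by auto
  qed
  then show "ite_density g \<le> 1 + g" "ite_density g = 1 + g \<longleftrightarrow> g \<in> \<int> \<or> 1 / g \<in> \<int>"
    by blast+
qed

section \<open>Asymptotics of the counting function\<close>

lemma N_alg_R_approx:
  assumes "0 < g" "g \<noteq> 1" "0 \<le> r"
  shows "\<bar>N_alg_R g r - ite_density g * r / pi\<bar> \<le> 4"
proof -
  define A where "A = ite_phase g r / pi"
  define C where "C = {x. 0 < x \<and> x \<le> r \<and> sin x = 0 \<and> sin (g * x) = 0}"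
  have N: "N_alg_R g r = real (nat \<lfloor>A\<rfloor>) + 2 * real (card C)"
    using N_alg_R_eq_card_add_triple [OF assms(1,2) card_ite_F_zeros(1) [OF assms]]
      card_ite_F_zeros(2) [OF assms] by (simp add: A_def C_def)
  have "0 \<le> ite_phase g r"
    using strict_mono_ite_phase [OF assms(1,2)] assms(3) ite_phase_0 [of g]
    by (metis order.order_iff_strict strict_monoD)
  then have "0 \<le> A" by (simp add: A_def)
  have floor_A: "A - 1 < of_int \<lfloor>A\<rfloor>" "of_int \<lfloor>A\<rfloor> \<le> A" by linarith+
  have "\<bar>ite_phase g r - \<bar>1 - g\<bar> * r\<bar> / pi < 1 / 2"
    using ite_phase_approx [of g r] by (simp add: divide_less_eq)
  then have A_approx: "\<bar>A - \<bar>1 - g\<bar> * r / pi\<bar> < 1 / 2"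
    by (simp add: A_def diff_divide_distrib [symmetric])
  show ?thesis
  proof (cases "denominators g = {}")
    case True
    then have "C = {}" using common_zero_sin_sin_mult_iff by (auto simp: C_def)
    with N \<open>0 \<le> A\<close> have "N_alg_R g r = of_int \<lfloor>A\<rfloor>" by simp
    moreover have "ite_density g * r / pi = \<bar>1 - g\<bar> * r / pi"
      using True by (simp add: ite_density_def)
    ultimately show ?thesis
      using A_approx floor_A unfolding abs_le_iff abs_less_iff by linarith
  next
    case False
    define B where "B = r / (real (min_denominator g) * pi)"
    have "0 < real (min_denominator g)"
      using min_denominator_mem [OF False] by (simp add: denominators_def)
    then have "0 \<le> B" and density: "ite_density g * r / pi = \<bar>1 - g\<bar> * r / pi + 2 * B"
      using assms(3) False by (simp_all add: B_def ite_density_def field_simps)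
    have "card C = nat \<lfloor>B\<rfloor>"
      unfolding C_def B_def by (rule card_common_zeros_sin_sin_mult [OF False assms(3)])
    with N \<open>0 \<le> A\<close> \<open>0 \<le> B\<close> have "N_alg_R g r = of_int \<lfloor>A\<rfloor> + 2 * of_int \<lfloor>B\<rfloor>" by simp
    moreover have "B - 1 < of_int \<lfloor>B\<rfloor>" "of_int \<lfloor>B\<rfloor> \<le> B" by linarith+
    ultimately show ?thesis
      using density A_approx floor_A unfolding abs_le_iff abs_less_iff by linarith
  qed
qed

theorem mainTheorem7:
  fixes \<gamma> :: real
  assumes "\<gamma> > 0" and "\<gamma> \<noteq> 1"
  shows "\<exists>c::real. c \<le> 1 + \<gamma> \<and>
           (\<lambda>r. N_alg_R \<gamma> r - c * r / pi) \<in> O[at_top](\<lambda>_. 1) \<and>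
           (c = 1 + \<gamma> \<longleftrightarrow> (\<gamma> \<in> \<int> \<or> 1 / \<gamma> \<in> \<int>))"
proof (intro exI conjI)
  show "ite_density \<gamma> \<le> 1 + \<gamma>"
    and "ite_density \<gamma> = 1 + \<gamma> \<longleftrightarrow> (\<gamma> \<in> \<int> \<or> 1 / \<gamma> \<in> \<int>)"
    using ite_density_le_one_add [OF assms(1)] by blast+
  have "eventually (\<lambda>r. norm (N_alg_R \<gamma> r - ite_density \<gamma> * r / pi) \<le> 4 * norm (1::real)) at_top"
    using eventually_ge_at_top [of 0] by eventually_elim (simp add: N_alg_R_approx assms)
  then show "(\<lambda>r. N_alg_R \<gamma> r - ite_density \<gamma> * r / pi) \<in> O[at_top](\<lambda>_. 1)"
    by (rule bigoI)
qed

end
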